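(* Let $n$ be a positive integer with $n\equiv0\pmod 4$, and $\epsilon,\Delta\in\mathbb R$. Consider $n$ parties on a ring (indices mod $n$); each even site $2i$ holds a vector $A^{(2i)}\in\{\pm1\}^4$ and each odd site $2i+1$ holds $B^{(2i+1)}\in\{\pm1\}^3$. Define $$J:=\sum_{i=0}^{n/2-1}\Big[(1+\epsilon)\,A^{(2i)T}S_\Delta B^{(2i+1)}+(1-\epsilon)\,B^{(2i+1)T}S_\Delta^{T}A^{(2i+2)}\Big].$$ Then the minimum of $J$ over all such assignments equals $-n\max\{1,|\epsilon|\}\,c(\Delta)$, where $c(\Delta)=4+2|\Delta|$ if $|\Delta|\le2$ and $c(\Delta)=4|\Delta|$ if $|\Delta|>2$.
   Context: $S_\Delta$ is the real $4\times3$ matrix with rows $(1,1,\Delta)$, $(1,-1,-\Delta)$, $(-1,1,-\Delta)$, $(-1,-1,\Delta)$. *)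

theory Defs
  imports "HOL-Analysis.Analysis"
begin

definition S_mat :: "real \<Rightarrow> nat \<Rightarrow> nat \<Rightarrow> real" where
  "S_mat D j l =
     (let r = (if j = 0 then (1,1,D) else if j = 1 then (1,-1,-D)
               else if j = 2 then (-1,1,-D) else (-1,-1,D))
      in if l = 0 then fst r else if l = 1 then fst (snd r) else snd (snd r))"

definition bilin :: "real \<Rightarrow> (nat \<Rightarrow> real) \<Rightarrow> (nat \<Rightarrow> real) \<Rightarrow> real" where
  "bilin D u v = (\<Sum>j<4. \<Sum>l<3. u j * S_mat D j l * v l)"

definition bilinT :: "real \<Rightarrow> (nat \<Rightarrow> real) \<Rightarrow> (nat \<Rightarrow> real) \<Rightarrow> real" where
  "bilinT D v u = (\<Sum>l<3. \<Sum>j<4. v l * S_mat D j l * u j)"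

(* A site k holds A k :: nat => real (coordinates 0..3), B site k holds B k (coords 0..2);
   sites taken mod n *)
definition J_val :: "nat \<Rightarrow> real \<Rightarrow> real \<Rightarrow> (nat \<Rightarrow> nat \<Rightarrow> real) \<Rightarrow> (nat \<Rightarrow> nat \<Rightarrow> real) \<Rightarrow> real" where
  "J_val n eps D A B = (\<Sum>i<n div 2.
      (1 + eps) * bilin D (A ((2*i) mod n)) (B ((2*i+1) mod n))
    + (1 - eps) * bilinT D (B ((2*i+1) mod n)) (A ((2*i+2) mod n)))"

definition valid_assign :: "nat \<Rightarrow> (nat \<Rightarrow> nat \<Rightarrow> real) \<Rightarrow> (nat \<Rightarrow> nat \<Rightarrow> real) \<Rightarrow> bool" where
  "valid_assign n A B \<longleftrightarrow>
     (\<forall>k<n. even k \<longrightarrow> (\<forall>j<4. A k j \<in> {1, -1})) \<and>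
     (\<forall>k<n. odd k \<longrightarrow> (\<forall>l<3. B k l \<in> {1, -1}))"

definition c_fun :: "real \<Rightarrow> real" where
  "c_fun D = (if \<bar>D\<bar> \<le> 2 then 4 + 2 * \<bar>D\<bar> else 4 * \<bar>D\<bar>)"

end

theory Submission imports Defs begin

text \<open>Every term of \<open>J\<close> pairs one \<open>B\<close>-vector with two neighbouring \<open>A\<close>-vectors, and for
  \<open>\<pm>1\<close> vectors \<open>\<bar>u\<^sup>T S\<^sub>\<Delta> v\<bar> \<le> \<parallel>S\<^sub>\<Delta> v\<parallel>\<^sub>1 \<le> c(\<Delta>)\<close>, checked over the eight
  sign patterns \<open>v\<close>. Hence each of the \<open>n/2\<close> terms is at least
  \<open>-(\<bar>1+\<epsilon>\<bar> + \<bar>1-\<epsilon>\<bar>) c(\<Delta>) = -2 max{1,\<bar>\<epsilon>\<bar>} c(\<Delta>)\<close>. Equality is attained by a fixed optimal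
  \<open>A\<close>-vector against the all-ones \<open>B\<close>-vector, with global signs chosen so that both products
  in each term have the signs of \<open>1+\<epsilon>\<close> and \<open>1-\<epsilon>\<close>: the \<open>i\<close>-th pair gets the sign
  \<open>(sgn(1+\<epsilon>) sgn(1-\<epsilon>))\<^sup>i\<close>, which closes up around the ring because \<open>n/2\<close> is even.\<close>

lemma bilin_expand:
  "bilin D u v = u 0 * (v 0 + v 1 + D * v 2) + u 1 * (v 0 - v 1 - D * v 2)
                + u 2 * (- v 0 + v 1 - D * v 2) + u 3 * (- v 0 - v 1 + D * v 2)"
  unfolding bilin_def S_mat_def by (simp add: eval_nat_numeral algebra_simps)

lemma bilinT_eq_bilin: "bilinT D v u = bilin D u v"
  unfolding bilinT_def bilin_expand S_mat_def by (simp add: eval_nat_numeral algebra_simps)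

lemma bilin_scale: "bilin D (\<lambda>j. s * u j) (\<lambda>l. t * v l) = s * t * bilin D u v"
  unfolding bilin_expand by (simp add: algebra_simps)

lemma abs_bilin_le_c_fun:
  assumes "\<forall>j<4. u j \<in> {1, -1}" and "\<forall>l<3. v l \<in> {1, -1}"
  shows "\<bar>bilin D u v\<bar> \<le> c_fun D"
proof -
  have "u 0 \<in> {1, -1}" "u 1 \<in> {1, -1}" "u 2 \<in> {1, -1}" "u 3 \<in> {1, -1}"
    using assms(1) by simp_all
  then have u: "\<bar>u 0\<bar> = 1" "\<bar>u 1\<bar> = 1" "\<bar>u 2\<bar> = 1" "\<bar>u 3\<bar> = 1" by auto
  have v: "v 0 = 1 \<or> v 0 = -1" "v 1 = 1 \<or> v 1 = -1" "v 2 = 1 \<or> v 2 = -1" using assms(2) by auto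
  have "\<bar>bilin D u v\<bar> \<le> \<bar>u 0\<bar> * \<bar>v 0 + v 1 + D * v 2\<bar> + \<bar>u 1\<bar> * \<bar>v 0 - v 1 - D * v 2\<bar>
      + \<bar>u 2\<bar> * \<bar>- v 0 + v 1 - D * v 2\<bar> + \<bar>u 3\<bar> * \<bar>- v 0 - v 1 + D * v 2\<bar>"
    unfolding bilin_expand abs_mult[symmetric] by linarith
  also have "\<dots> = \<bar>v 0 + v 1 + D * v 2\<bar> + \<bar>v 0 - v 1 - D * v 2\<bar>
      + \<bar>- v 0 + v 1 - D * v 2\<bar> + \<bar>- v 0 - v 1 + D * v 2\<bar>"
    using u by simp
  also have "\<dots> \<le> c_fun D"
    unfolding c_fun_def using v by (elim disjE) (simp_all add: abs_if)
  finally show ?thesis .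
qed

definition S_minimizer :: "real \<Rightarrow> nat \<Rightarrow> real" where
  "S_minimizer D j =
     (if j = 0 then (if 0 \<le> 2 + D then -1 else 1)
      else if j = 1 \<or> j = 2 then (if 0 \<le> - D then -1 else 1)
      else (if 0 \<le> D - 2 then -1 else 1))"

lemma S_minimizer_pm: "S_minimizer D j \<in> {1, -1}"
  unfolding S_minimizer_def by auto

lemma bilin_S_minimizer: "bilin D (S_minimizer D) (\<lambda>_. 1) = - c_fun D"
  unfolding bilin_expand S_minimizer_def c_fun_def by (simp; arith)

lemma abs_one_plus_abs_one_minus: "\<bar>1 + e\<bar> + \<bar>1 - e\<bar> = 2 * max 1 \<bar>e :: real\<bar>"
  by (auto simp: max_def abs_if)

lemma weighted_pair_ge:
  fixes X Y c e :: real
  assumes "\<bar>X\<bar> \<le> c" and "\<bar>Y\<bar> \<le> c"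
  shows "- ((\<bar>1 + e\<bar> + \<bar>1 - e\<bar>) * c) \<le> (1 + e) * X + (1 - e) * Y"
proof -
  have "\<bar>(1 + e) * X\<bar> \<le> \<bar>1 + e\<bar> * c" "\<bar>(1 - e) * Y\<bar> \<le> \<bar>1 - e\<bar> * c"
    using assms by (simp_all add: abs_mult mult_left_mono)
  then show ?thesis by (simp add: distrib_right abs_le_iff)
qed

definition pm_sign :: "real \<Rightarrow> real" where
  "pm_sign x = (if 0 \<le> x then 1 else -1)"

lemma pm_sign_pm: "pm_sign x \<in> {1, -1}"
  unfolding pm_sign_def by simp

lemma mult_pm_sign: "x * pm_sign x = \<bar>x\<bar>"
  unfolding pm_sign_def by simp

lemma pm_mult_self: "x \<in> {1, -1 :: real} \<Longrightarrow> x * x = 1"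
  by auto

lemma pm_mult: "x \<in> {1, -1 :: real} \<Longrightarrow> y \<in> {1, -1} \<Longrightarrow> x * y \<in> {1, -1}"
  by auto

lemma pm_power: "x \<in> {1, -1 :: real} \<Longrightarrow> x ^ k \<in> {1, -1}"
  by (induction k) auto

lemma power_mod_period:
  fixes r :: "'a :: monoid_mult"
  assumes "r ^ p = 1"
  shows "r ^ (m mod p) = r ^ m"
proof -
  have "r ^ m = (r ^ p) ^ (m div p) * r ^ (m mod p)"
    by (metis power_add power_mult mult.commute div_mult_mod_eq)
  then show ?thesis using assms by simp
qed

lemma ring_sites:
  fixes n i :: nat
  assumes "even n" and "i < n div 2"
  shows "(2 * i) mod n = 2 * i" and "(2 * i + 1) mod n = 2 * i + 1"
    and "(2 * i + 2) mod n div 2 = (i + 1) mod (n div 2)"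
proof -
  obtain m where n: "n = 2 * m" using assms(1) by (elim evenE)
  then show "(2 * i) mod n = 2 * i" "(2 * i + 1) mod n = 2 * i + 1" using assms(2) by auto
  have "(2 * i + 2) mod n = 2 * ((i + 1) mod m)"
    unfolding n by (metis mult_mod_right distrib_left mult_1_right)
  then show "(2 * i + 2) mod n div 2 = (i + 1) mod (n div 2)" using n by simp
qed

lemma J_val_ge:
  assumes "even n" and "valid_assign n A B"
  shows "- real n * max 1 \<bar>eps\<bar> * c_fun D \<le> J_val n eps D A B"
proof -
  let ?K = "(\<bar>1 + eps\<bar> + \<bar>1 - eps\<bar>) * c_fun D"
  have "- ?K \<le> (1 + eps) * bilin D (A ((2 * i) mod n)) (B ((2 * i + 1) mod n))
      + (1 - eps) * bilin D (A ((2 * i + 2) mod n)) (B ((2 * i + 1) mod n))"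
    if "i < n div 2" for i
  proof -
    have "(2 * i) mod n < n" "(2 * i + 1) mod n < n" "(2 * i + 2) mod n < n"
      and "even ((2 * i) mod n)" "odd ((2 * i + 1) mod n)" "even ((2 * i + 2) mod n)"
      using assms(1) that by (auto simp: dvd_mod_iff)
    then have "\<forall>j<4. A ((2 * i) mod n) j \<in> {1, -1}" "\<forall>j<4. A ((2 * i + 2) mod n) j \<in> {1, -1}"
      "\<forall>l<3. B ((2 * i + 1) mod n) l \<in> {1, -1}"
      using assms(2) unfolding valid_assign_def by blast+
    then show ?thesis by (intro weighted_pair_ge abs_bilin_le_c_fun)
  qed
  then have "(\<Sum>i<n div 2. - ?K) \<le> J_val n eps D A B"
    unfolding J_val_def bilinT_eq_bilin by (intro sum_mono) simp
  moreover have "(\<Sum>i<n div 2. - ?K) = - real n * max 1 \<bar>eps\<bar> * c_fun D"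
    using assms(1) by (auto elim!: evenE simp: abs_one_plus_abs_one_minus)
  ultimately show ?thesis by linarith
qed

lemma J_val_attains:
  assumes "4 dvd n"
  shows "\<exists>A B. valid_assign n A B \<and> J_val n eps D A B = - real n * max 1 \<bar>eps\<bar> * c_fun D"
proof -
  define a where "a = pm_sign (1 + eps)"
  define b where "b = pm_sign (1 - eps)"
  define r where "r = a * b"
  define A where "A k j = r ^ (k div 2) * S_minimizer D j" for k j
  define B where "B k (l :: nat) = a * r ^ (k div 2)" for k l
  have a: "a \<in> {1, -1}" and r: "r \<in> {1, -1}"
    unfolding a_def b_def r_def using pm_sign_pm pm_mult by blast+
  have ev: "even n" and "even (n div 2)" using assms by auto
  then have period: "r ^ (n div 2) = 1"
    using r by (auto elim!: evenE simp: power_mult)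
  have valid: "valid_assign n A B"
    unfolding valid_assign_def A_def B_def
    using pm_mult[OF pm_power[OF r] S_minimizer_pm] pm_mult[OF a pm_power[OF r]] by blast
  have pair_term: "(1 + eps) * bilin D (A ((2 * i) mod n)) (B ((2 * i + 1) mod n))
      + (1 - eps) * bilinT D (B ((2 * i + 1) mod n)) (A ((2 * i + 2) mod n))
      = - ((\<bar>1 + eps\<bar> + \<bar>1 - eps\<bar>) * c_fun D)" if "i < n div 2" for i
  proof -
    have rr: "r ^ i * r ^ i = 1"
      using pm_mult_self[OF pm_power[OF r]] by simp
    have sites: "A ((2 * i) mod n) = (\<lambda>j. r ^ i * S_minimizer D j)"
      "B ((2 * i + 1) mod n) = (\<lambda>l. a * r ^ i * 1)"
      "A ((2 * i + 2) mod n) = (\<lambda>j. r ^ (i + 1) * S_minimizer D j)"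
      by (simp_all add: fun_eq_iff A_def B_def ring_sites[OF ev that, simplified] power_mod_period[OF period])
    have first: "bilin D (A ((2 * i) mod n)) (B ((2 * i + 1) mod n)) = - (a * c_fun D)"
      unfolding sites bilin_scale bilin_S_minimizer using rr by (simp add: mult_ac)
    have second: "bilin D (A ((2 * i + 2) mod n)) (B ((2 * i + 1) mod n)) = - (b * c_fun D)"
      unfolding sites bilin_scale bilin_S_minimizer using rr pm_mult_self[OF a]
      by (simp add: r_def mult_ac)
    have "(1 + eps) * - (a * c_fun D) + (1 - eps) * - (b * c_fun D)
        = - (((1 + eps) * a + (1 - eps) * b) * c_fun D)"
      by (simp add: algebra_simps)
    then show ?thesis
      unfolding bilinT_eq_bilin first second a_def b_def mult_pm_sign .
  qed
  have "J_val n eps D A B = (\<Sum>i<n div 2. - ((\<bar>1 + eps\<bar> + \<bar>1 - eps\<bar>) * c_fun D))"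
    unfolding J_val_def using pair_term by (intro sum.cong) simp_all
  also have "\<dots> = - real n * max 1 \<bar>eps\<bar> * c_fun D"
    using ev by (auto elim!: evenE simp: abs_one_plus_abs_one_minus)
  finally have "J_val n eps D A B = - real n * max 1 \<bar>eps\<bar> * c_fun D" .
  with valid show ?thesis by blast
qed

theorem mainTheorem11:
  fixes n :: nat and eps D :: real
  assumes "n > 0" and "n mod 4 = 0"
  shows "(\<forall>A B. valid_assign n A B \<longrightarrow>
            J_val n eps D A B \<ge> - real n * max 1 \<bar>eps\<bar> * c_fun D) \<and>
         (\<exists>A B. valid_assign n A B \<and>
            J_val n eps D A B = - real n * max 1 \<bar>eps\<bar> * c_fun D)"
proof -
  have "4 dvd n" using assms(2) by presburger
  then have "even n" by auto
  then show ?thesis using J_val_ge J_val_attains[OF \<open>4 dvd n\<close>] by blast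
qed

end
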